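(* Let $(D(t),\,t\ge0)$ be a random nonnegative demand process (with locally integrable paths), let the initial energy configuration be given, and let $T\in(0,\infty]$. The GGDDF policy is non-anticipatory: its rates at each time $t$ depend only on $D(t)$ and on the current stored energies $(E_i(t),\,i\in\mathcal S)$. Moreover, for every discharge-only policy $\pi$ that is non-anticipatory (its rates at time $t$ depend only on $(D(s),\,s\le t)$), the unserved energy $U_{\mathrm{GGDDF}}$ over $[0,T]$ under GGDDF satisfies $U_{\mathrm{GGDDF}}\le U_\pi$ almost surely; consequently GGDDF minimises the expectation of the unserved energy over $[0,T]$ and, for every $q\in(0,1)$, the $q$-quantile of its distribution, among all such policies.
   Context: A finite set $\mathcal S$ of energy stores is given. Store $i\in\mathcal S$ has capacity $\overline E_i>0$ and maximum discharge rate $P_i>0$. A (discharge-only) policy is a choice of measurable rate functions $(r_i(t),\,t\ge0)$, $i\in\mathcal S$, with stored energies $E_i(t)=E_i(0)-\int_0^t r_i(u)\,du$, subject to $0\le E_i(t)\le\overline E_i$, $0\le r_i(t)\le P_i$ and $\sum_{i\in\mathcal S}r_i(t)\le d(t)$ for all $t\ge0$, where $(d(t),\,t\ge0)$ is a nonnegative demand function. The unserved energy over $[0,T]$ is $\int_0^T\max\bigl(d(t)-\sum_{i}r_i(t),0\bigr)dt$. GGDDF (greedy greatest-discharge-duration-first) policy: at (almost) every time $t$, the total served rate is $\bar d(t)=\min\bigl(d(t),\sum_{i:E_i(t)>0}P_i\bigr)$, and it is allocated as follows: the nonempty stores are partitioned into groups $G_1,G_2,\dots$ of equal discharge-duration $E_i(t)/P_i$,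 listed in strictly decreasing order of that duration; letting $m$ be the least index with $\sum_{k\le m}\sum_{i\in G_k}P_i\ge\bar d(t)$, every store in $G_k$ with $k<m$ discharges at rate $P_i$, every store $i\in G_m$ discharges at rate $\lambda P_i$ with $\lambda\in(0,1]$ chosen so that $\sum_i r_i(t)=\bar d(t)$, and all other stores have rate $0$ (all rates are $0$ if $\bar d(t)=0$). *)

theory Defs
  imports "HOL-Probability.Probability"
begin

definition energy :: "('s \<Rightarrow> real) \<Rightarrow> ('s \<Rightarrow> real \<Rightarrow> real) \<Rightarrow> 's \<Rightarrow> real \<Rightarrow> real" where
  "energy E0 r i t = E0 i - (LINT u:{0..t}|lborel. r i u)"

definition is_policy :: "'s set \<Rightarrow> ('s \<Rightarrow> real) \<Rightarrow> ('s \<Rightarrow> real) \<Rightarrow> ('s \<Rightarrow> real)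
    \<Rightarrow> (real \<Rightarrow> real) \<Rightarrow> ('s \<Rightarrow> real \<Rightarrow> real) \<Rightarrow> bool" where
  "is_policy S Ebar P E0 d r \<longleftrightarrow>
     (\<forall>i\<in>S. set_borel_measurable lborel {0..} (r i)) \<and>
     (\<forall>t\<ge>0. (\<forall>i\<in>S. 0 \<le> energy E0 r i t \<and> energy E0 r i t \<le> Ebar i
                    \<and> 0 \<le> r i t \<and> r i t \<le> P i)
            \<and> (\<Sum>i\<in>S. r i t) \<le> d t)"

definition unserved :: "'s set \<Rightarrow> (real \<Rightarrow> real) \<Rightarrow> ('s \<Rightarrow> real \<Rightarrow> real) \<Rightarrow> ereal \<Rightarrow> ennreal" where
  "unserved S d r T =
     (\<integral>\<^sup>+ t\<in>{t. 0 \<le> t \<and> ereal t \<le> T}. ennreal (max (d t - (\<Sum>i\<in>S. r i t)) 0) \<partial>lborel)"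

text \<open>The nonempty stores N are grouped by equal duration e i / P i; the groups in decreasing
  order of duration; the cumulative capacity through the group of duration tau is the sum of
  P i over nonempty stores of duration >= tau; the least index m with cumulative capacity
  >= dbar corresponds to the greatest such duration tau.\<close>
definition ggddf_rates :: "'s set \<Rightarrow> ('s \<Rightarrow> real) \<Rightarrow> real \<Rightarrow> ('s \<Rightarrow> real) \<Rightarrow> ('s \<Rightarrow> real) \<Rightarrow> bool" where
  "ggddf_rates S P x e \<rho> \<longleftrightarrow>
    (let N = {i\<in>S. 0 < e i};
         dbar = min x (\<Sum>i\<in>N. P i);
         dur = (\<lambda>i. e i / P i)
     in if dbar = 0 then (\<forall>i\<in>S. \<rho> i = 0)
        else (let \<tau> = Max {\<tau> \<in> dur ` N. dbar \<le> (\<Sum>i\<in>{j\<in>N. \<tau> \<le> dur j}. P i)}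
              in \<exists>lam. 0 < lam \<and> lam \<le> 1 \<and>
                   (\<forall>i\<in>S. \<rho> i = (if i \<in> N \<and> \<tau> < dur i then P i
                                  else if i \<in> N \<and> dur i = \<tau> then lam * P i else 0)) \<and>
                   (\<Sum>i\<in>S. \<rho> i) = dbar))"

definition ggddf :: "'s set \<Rightarrow> ('s \<Rightarrow> real) \<Rightarrow> ('s \<Rightarrow> real) \<Rightarrow> (real \<Rightarrow> real) \<Rightarrow> ('s \<Rightarrow> real \<Rightarrow> real) \<Rightarrow> bool" where
  "ggddf S P E0 d r \<longleftrightarrow>
     (AE t in lborel. 0 \<le> t \<longrightarrow> ggddf_rates S P (d t) (\<lambda>i. energy E0 r i t) (\<lambda>i. r i t))"

definition nonanticipatory :: "'w measure \<Rightarrow> ('w \<Rightarrow> real \<Rightarrow> real) \<Rightarrow> ('w \<Rightarrow> 's \<Rightarrow> real \<Rightarrow> real) \<Rightarrow> 's set \<Rightarrow> bool" where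
  "nonanticipatory M D \<pi> S \<longleftrightarrow>
     (\<forall>t\<ge>0. \<forall>\<omega>\<in>space M. \<forall>\<omega>'\<in>space M. (\<forall>s\<in>{0..t}. D \<omega> s = D \<omega>' s) \<longrightarrow> (\<forall>i\<in>S. \<pi> \<omega> i t = \<pi> \<omega>' i t))"

definition quantile :: "'w measure \<Rightarrow> ('w \<Rightarrow> ennreal) \<Rightarrow> real \<Rightarrow> ennreal" where
  "quantile M X q = Inf {x. q \<le> measure M {\<omega>\<in>space M. X \<omega> \<le> x}}"

end

theory Submission
  imports Defs
begin

(*
  GGDDF keeps the stores ordered by discharge duration E_i/P_i: a store with the longer duration
  discharges at least as fast relative to its power, so an order between two durations, once
  reached, persists. Fix a time t and let K be the stores still nonempty at t under GGDDF. Every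
  store outside K then had a shorter duration than every store of K throughout [0,t]. Hence at
  almost every instant before t either all stores of K discharge at full power, or GGDDF serves
  the whole demand while the stores outside K are idle; in both cases K delivers at least what any
  feasible policy draws from K. The stores outside K have delivered all their initial energy, which
  no policy can exceed. So by every time t GGDDF has served at least as much energy as any feasible
  policy, path by path.
*)

lemma ggddf_rates_cases [consumes 1, case_names idle allocate]:
  assumes "ggddf_rates S P x e \<rho>"
  obtains "\<forall>i\<in>S. \<rho> i = 0" "min x (\<Sum>i\<in>{i\<in>S. 0 < e i}. P i) = 0"
  | \<tau> lam where "0 < lam" "lam \<le> 1"
     "\<forall>i\<in>S. \<rho> i = (if i \<in> {i\<in>S. 0 < e i} \<and> \<tau> < e i / P i then P i
              else if i \<in> {i\<in>S. 0 < e i} \<and> e i / P i = \<tau> then lam * P i else 0)"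
     "(\<Sum>i\<in>S. \<rho> i) = min x (\<Sum>i\<in>{i\<in>S. 0 < e i}. P i)"
     "min x (\<Sum>i\<in>{i\<in>S. 0 < e i}. P i) \<noteq> 0"
     "\<tau> = Max {\<tau> \<in> (\<lambda>i. e i / P i) ` {i\<in>S. 0 < e i}.
               min x (\<Sum>i\<in>{i\<in>S. 0 < e i}. P i) \<le> (\<Sum>i\<in>{j\<in>{i\<in>S. 0 < e i}. \<tau> \<le> e j / P j}. P i)}"
proof -
  let ?N = "{i\<in>S. 0 < e i}"
  let ?db = "min x (\<Sum>i\<in>?N. P i)"
  let ?\<tau> = "Max {\<tau> \<in> (\<lambda>i. e i / P i) ` ?N. ?db \<le> (\<Sum>i\<in>{j\<in>?N. \<tau> \<le> e j / P j}. P i)}"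
  show thesis
  proof (cases "?db = 0")
    case True
    then show thesis using assms that(1) unfolding ggddf_rates_def Let_def by simp
  next
    case False
    then obtain lam where lam: "0 < lam" "lam \<le> 1"
      "\<forall>i\<in>S. \<rho> i = (if i \<in> ?N \<and> ?\<tau> < e i / P i then P i
              else if i \<in> ?N \<and> e i / P i = ?\<tau> then lam * P i else 0)"
      "(\<Sum>i\<in>S. \<rho> i) = ?db"
      using assms unfolding ggddf_rates_def Let_def by auto
    from that(2)[OF lam False refl] show thesis .
  qed
qed

lemma ggddf_rates_ratio_mono:
  assumes g: "ggddf_rates S P x e \<rho>" and "\<forall>i\<in>S. 0 < P i" "\<forall>i\<in>S. 0 \<le> e i"
    and i: "i \<in> S" and k: "k \<in> S" and lt: "e k / P k < e i / P i"
  shows "\<rho> k / P k \<le> \<rho> i / P i"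
  using g
proof (cases rule: ggddf_rates_cases)
  case idle
  then show ?thesis using i k by simp
next
  case (allocate \<tau> lam)
  have "0 < P i" "0 < P k" "0 \<le> e k" using assms i k by auto
  then have "0 < e i" using lt by (smt (verit) divide_nonneg_pos divide_nonpos_pos)
  then show ?thesis using allocate(1-3) i k lt \<open>0 < P i\<close> \<open>0 < P k\<close> by auto
qed

lemma ggddf_rates_idle_below_unsaturated:
  assumes g: "ggddf_rates S P x e \<rho>"
    and i: "i \<in> S" and "k \<in> S" "0 < e k" "\<rho> k \<noteq> P k"
    and lt: "e i / P i < e k / P k"
  shows "\<rho> i = 0"
  using g
proof (cases rule: ggddf_rates_cases)
  case idle
  then show ?thesis using i by simp
next
  case (allocate \<tau> lam)
  then have "\<not> \<tau> < e k / P k" using assms by auto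
  then show ?thesis using allocate(3) i lt by auto
qed

lemma ggddf_rates_meets_demand:
  assumes g: "ggddf_rates S P x e \<rho>" and fin: "finite S" and Ppos: "\<forall>i\<in>S. 0 < P i"
    and k: "k \<in> S" "0 < e k" and unsat: "\<rho> k \<noteq> P k"
  shows "(\<Sum>i\<in>S. \<rho> i) = x"
proof -
  let ?N = "{i\<in>S. 0 < e i}"
  let ?dur = "\<lambda>i. e i / P i"
  have finN: "finite ?N" and kN: "k \<in> ?N" using fin k by auto
  have Pk: "0 < P k" using Ppos k by auto
  have capacity: "P k \<le> (\<Sum>i\<in>?N. P i)"
    using finN kN Ppos by (intro member_le_sum) auto
  show ?thesis using g
  proof (cases rule: ggddf_rates_cases)
    case idle
    then show ?thesis using capacity Pk by (simp add: min_def split: if_splits)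
  next
    case (allocate \<tau> lam)
    show ?thesis
    proof (rule ccontr)
      assume "(\<Sum>i\<in>S. \<rho> i) \<noteq> x"
      then have db: "min x (\<Sum>i\<in>?N. P i) = (\<Sum>i\<in>?N. P i)"
        using allocate(4) by (auto simp: min_def)
      let ?Q = "{\<tau> \<in> ?dur ` ?N. min x (\<Sum>i\<in>?N. P i) \<le> (\<Sum>i\<in>{j\<in>?N. \<tau> \<le> ?dur j}. P i)}"
      have "{j\<in>?N. Min (?dur ` ?N) \<le> ?dur j} = ?N" using finN by auto
      then have "Min (?dur ` ?N) \<in> ?Q"
        using finN kN db by (auto intro: Min_in)
      then have "\<tau> \<in> ?Q" unfolding allocate(6) using finN by (intro Max_in) auto
      then have covered: "(\<Sum>i\<in>?N. P i) \<le> (\<Sum>i\<in>{j\<in>?N. \<tau> \<le> ?dur j}. P i)"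
        using db by simp
      have "\<tau> \<le> ?dur j" if "j \<in> ?N" for j
      proof (rule ccontr)
        assume "\<not> \<tau> \<le> ?dur j"
        then have "(\<Sum>i\<in>{j\<in>?N. \<tau> \<le> ?dur j}. P i) < (\<Sum>i\<in>?N. P i)"
          using finN that Ppos by (intro sum_strict_mono2[of ?N]) auto
        then show False using covered by simp
      qed
      then have "\<tau> \<le> ?dur k" using kN .
      then have "?dur k = \<tau>" using allocate(3) k unsat by (auto split: if_splits)
      then have "\<rho> k = lam * P k" using allocate(3) k by auto
      then have "lam < 1" using allocate(2) unsat by auto
      have "(\<Sum>i\<in>S. \<rho> i) < (\<Sum>i\<in>S. if i \<in> ?N then P i else 0)"
      proof (rule sum_strict_mono_ex1[OF fin])
        show "\<forall>i\<in>S. \<rho> i \<le> (if i \<in> ?N then P i else 0)"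
          using allocate(1-3) Ppos by (auto simp: mult_le_cancel_right1 less_imp_le)
        show "\<exists>i\<in>S. \<rho> i < (if i \<in> ?N then P i else 0)"
          using k \<open>\<rho> k = lam * P k\<close> \<open>lam < 1\<close> Pk by (intro bexI[of _ k]) auto
      qed
      also have "\<dots> = (\<Sum>i\<in>?N. P i)" using fin by (simp add: sum.inter_filter)
      finally show False using allocate(4) db by simp
    qed
  qed
qed

lemma ggddf_rates_unique:
  assumes g1: "ggddf_rates S P x e \<rho>1" and g2: "ggddf_rates S P x e \<rho>2"
    and fin: "finite S" and Ppos: "\<forall>i\<in>S. 0 < P i" and i: "i \<in> S"
  shows "\<rho>1 i = \<rho>2 i"
  using g1
proof (cases rule: ggddf_rates_cases)
  case idle
  with g2 show ?thesis
    by (cases rule: ggddf_rates_cases) (use i in simp_all)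
next
  case (allocate \<tau> lam)
  note first = this
  show ?thesis using g2
  proof (cases rule: ggddf_rates_cases)
    case idle
    then show ?thesis using first by simp
  next
    case (allocate \<tau>' lam')
    let ?G = "{j\<in>S. 0 < e j \<and> e j / P j = \<tau>}"
    have diff: "\<forall>j\<in>S. \<rho>1 j - \<rho>2 j = (if j \<in> ?G then (lam - lam') * P j else 0)"
      using first(3,6) allocate(3,6) by (auto simp: algebra_simps)
    \<comment> \<open>both allocations serve the same total, which pins down the fill level of the marginal group\<close>
    have "0 = (\<Sum>j\<in>S. \<rho>1 j - \<rho>2 j)"
      using first(4) allocate(4) by (simp add: sum_subtractf)
    also have "\<dots> = (\<Sum>j\<in>?G. (lam - lam') * P j)"
      using diff fin by (simp add: sum.inter_filter[symmetric] cong: sum.cong)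
    finally have "(lam - lam') * (\<Sum>j\<in>?G. P j) = 0"
      by (simp add: sum_distrib_left)
    moreover have "0 < (\<Sum>j\<in>?G. P j)" if "i \<in> ?G"
      using that fin Ppos by (intro sum_pos2[of _ i]) auto
    ultimately show ?thesis using diff i by (cases "i \<in> ?G") auto
  qed
qed

lemma ggddf_rates_upper_set_dominates:
  assumes g: "ggddf_rates S P x e \<rho>" and fin: "finite S" and Ppos: "\<forall>i\<in>S. 0 < P i"
    and K: "K \<subseteq> S" "\<forall>k\<in>K. 0 < e k"
    and upper: "\<forall>i\<in>S - K. \<forall>k\<in>K. e i / P i < e k / P k"
    and \<sigma>: "\<forall>i\<in>S. 0 \<le> \<sigma> i \<and> \<sigma> i \<le> P i" "(\<Sum>i\<in>S. \<sigma> i) \<le> x"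
  shows "(\<Sum>i\<in>K. \<sigma> i) \<le> (\<Sum>i\<in>K. \<rho> i)"
proof (cases "\<forall>k\<in>K. \<rho> k = P k")
  case True
  then show ?thesis using K \<sigma> by (intro sum_mono) auto
next
  case False
  then obtain k where k: "k \<in> K" "\<rho> k \<noteq> P k" by blast
  have "\<rho> i = 0" if "i \<in> S - K" for i
    using ggddf_rates_idle_below_unsaturated[OF g _ _ _ k(2)] that k(1) K upper by blast
  then have "(\<Sum>i\<in>K. \<rho> i) = (\<Sum>i\<in>S. \<rho> i)"
    using fin K by (intro sum.mono_neutral_left) auto
  also have "\<dots> = x"
    using ggddf_rates_meets_demand[OF g fin Ppos _ _ k(2)] k(1) K by blast
  also have "x \<ge> (\<Sum>i\<in>S. \<sigma> i)" by (fact \<sigma>(2))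
  also have "(\<Sum>i\<in>S. \<sigma> i) \<ge> (\<Sum>i\<in>K. \<sigma> i)"
    using fin K \<sigma>(1) by (intro sum_mono2) auto
  finally show ?thesis .
qed

lemma set_integrable_sum:
  fixes f :: "'i \<Rightarrow> 'a \<Rightarrow> real"
  assumes "\<And>i. i \<in> I \<Longrightarrow> set_integrable M A (f i)"
  shows "set_integrable M A (\<lambda>x. \<Sum>i\<in>I. f i x)"
  using assms unfolding set_integrable_def
  by (simp add: sum_distrib_left)

lemma set_integral_sum:
  fixes f :: "'i \<Rightarrow> 'a \<Rightarrow> real"
  assumes "\<And>i. i \<in> I \<Longrightarrow> set_integrable M A (f i)"
  shows "(LINT x:A|M. (\<Sum>i\<in>I. f i x)) = (\<Sum>i\<in>I. LINT x:A|M. f i x)"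
  using assms unfolding set_integrable_def set_lebesgue_integral_def
  by (simp add: sum_distrib_left Bochner_Integration.integral_sum)

lemma is_policyD:
  assumes "is_policy S Ebar P E0 d r" and "i \<in> S" and "0 \<le> t"
  shows "0 \<le> r i t" "r i t \<le> P i" "0 \<le> energy E0 r i t" "energy E0 r i t \<le> Ebar i"
    "(\<Sum>j\<in>S. r j t) \<le> d t"
  using assms unfolding is_policy_def by auto

lemma policy_set_integrable:
  assumes p: "is_policy S Ebar P E0 d r" and i: "i \<in> S"
    and B: "B \<in> sets lborel" "B \<subseteq> {0..t}"
  shows "set_integrable lborel B (r i)"
proof -
  have "set_integrable lborel {0..t} (\<lambda>_. P i)"
    unfolding set_integrable_def by (cases "0 \<le> t") auto
  moreover have "set_borel_measurable lborel {0..} (r i)"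
    using p i unfolding is_policy_def by blast
  then have "set_borel_measurable lborel {0..t} (r i)"
    by (rule set_borel_measurable_subset) auto
  moreover have "AE x in lborel. x \<in> {0..t} \<longrightarrow> norm (r i x) \<le> norm (P i)"
    using is_policyD(1,2)[OF p i] by (intro AE_I2) force
  ultimately have "set_integrable lborel {0..t} (r i)"
    by (rule set_integrable_bound)
  then show ?thesis using B by (rule set_integrable_subset)
qed

lemma energy_diff_eq_integral:
  assumes p: "is_policy S Ebar P E0 d r" and i: "i \<in> S" and ab: "0 \<le> a" "a \<le> b"
  shows "energy E0 r i a - energy E0 r i b = (LINT u:{a<..b}|lborel. r i u)"
proof -
  have "{0..b} = {0..a} \<union> {a<..b}" using ab by auto
  then have "(LINT u:{0..b}|lborel. r i u) = (LINT u:{0..a} \<union> {a<..b}|lborel. r i u)" by simp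
  also have "\<dots> = (LINT u:{0..a}|lborel. r i u) + (LINT u:{a<..b}|lborel. r i u)"
    by (rule set_integral_Un) (use ab in \<open>auto intro!: policy_set_integrable[OF p i, of _ b]\<close>)
  finally show ?thesis unfolding energy_def by simp
qed

lemma energy_decrease_bounds:
  assumes p: "is_policy S Ebar P E0 d r" and i: "i \<in> S" and ab: "0 \<le> a" "a \<le> b"
  shows "0 \<le> energy E0 r i a - energy E0 r i b" "energy E0 r i a - energy E0 r i b \<le> P i * (b - a)"
proof -
  have r: "set_integrable lborel {a<..b} (r i)"
    using ab by (intro policy_set_integrable[OF p i, of _ b]) auto
  have "0 \<le> (LINT u:{a<..b}|lborel. r i u)"
    using is_policyD(1)[OF p i] ab
    by (auto simp: set_lebesgue_integral_def indicator_def intro!: integral_nonneg_AE)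
  then show "0 \<le> energy E0 r i a - energy E0 r i b" using energy_diff_eq_integral[OF p i ab] by simp
  have "(LINT u:{a<..b}|lborel. r i u) \<le> (LINT u:{a<..b}|lborel. P i)"
    using r is_policyD(2)[OF p i] ab
    by (intro set_integral_mono) (auto simp: set_integrable_def)
  also have "\<dots> = P i * (b - a)" using ab by (simp add: set_integral_const)
  finally show "energy E0 r i a - energy E0 r i b \<le> P i * (b - a)"
    using energy_diff_eq_integral[OF p i ab] by simp
qed

lemma energy_continuous_on:
  assumes p: "is_policy S Ebar P E0 d r" and i: "i \<in> S" and "0 \<le> P i"
  shows "continuous_on {0..} (energy E0 r i)"
proof (rule lipschitz_on_continuous_on)
  show "lipschitz_on (P i) {0..} (energy E0 r i)"
    unfolding lipschitz_on_def dist_real_def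
  proof (intro conjI ballI \<open>0 \<le> P i\<close>)
    fix a b :: real assume "a \<in> {0..}" "b \<in> {0..}"
    then show "\<bar>energy E0 r i a - energy E0 r i b\<bar> \<le> P i * \<bar>a - b\<bar>"
      using energy_decrease_bounds[OF p i, of a b] energy_decrease_bounds[OF p i, of b a]
      by (cases "a \<le> b") auto
  qed
qed

lemma continuous_on_last_nonneg:
  fixes f :: "real \<Rightarrow> real"
  assumes cont: "continuous_on {u..v} f" and "u \<le> v" "0 \<le> f u" "f v < 0"
  obtains w where "u \<le> w" "w < v" "0 \<le> f w" "\<And>x. w < x \<Longrightarrow> x \<le> v \<Longrightarrow> f x < 0"
proof -
  define A where "A = {u..v} \<inter> f -` {0..}"
  have "closed A" unfolding A_def by (intro continuous_closed_preimage cont) auto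
  moreover have "u \<in> A" "bdd_above A" unfolding A_def using assms by auto
  ultimately have "Sup A \<in> A" by (intro closed_contains_Sup) auto
  then have "u \<le> Sup A" "Sup A \<le> v" "0 \<le> f (Sup A)" unfolding A_def by auto
  moreover have "f x < 0" if "Sup A < x" "x \<le> v" for x
    using cSup_upper[OF _ \<open>bdd_above A\<close>, of x] that \<open>u \<le> Sup A\<close> unfolding A_def by force
  moreover have "Sup A \<noteq> v" using \<open>0 \<le> f (Sup A)\<close> \<open>f v < 0\<close> by auto
  ultimately show thesis by (intro that) auto
qed

lemma ggddf_duration_order_preserved:
  assumes p: "is_policy S Ebar P E0 d r" and g: "ggddf S P E0 d r"
    and Ppos: "\<forall>i\<in>S. 0 < P i" and i: "i \<in> S" and k: "k \<in> S" and uv: "0 \<le> u" "u \<le> v"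
    and le: "energy E0 r k u / P k \<le> energy E0 r i u / P i"
  shows "energy E0 r k v / P k \<le> energy E0 r i v / P i"
proof (rule ccontr)
  define f where "f t = energy E0 r i t / P i - energy E0 r k t / P k" for t
  assume "\<not> ?thesis"
  then have "f v < 0" unfolding f_def by simp
  moreover have "0 \<le> f u" using le unfolding f_def by simp
  moreover have "continuous_on {u..v} f" unfolding f_def
    using Ppos i k uv
    by (intro continuous_on_diff continuous_on_divide continuous_on_const
        continuous_on_subset[OF energy_continuous_on[OF p]]) auto
  ultimately obtain w where w: "u \<le> w" "w < v" "0 \<le> f w"
    and after: "\<And>x. w < x \<Longrightarrow> x \<le> v \<Longrightarrow> f x < 0"
    using continuous_on_last_nonneg \<open>u \<le> v\<close> by blast
  have "AE x\<in>{w<..v} in lborel. r i x / P i \<le> r k x / P k"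
    using g unfolding ggddf_def
  proof (rule AE_mp, intro AE_I2 impI)
    fix x assume gx: "0 \<le> x \<longrightarrow> ggddf_rates S P (d x) (\<lambda>j. energy E0 r j x) (\<lambda>j. r j x)"
      and x: "x \<in> {w<..v}"
    then have "0 \<le> x" using w uv by auto
    moreover have "energy E0 r i x / P i < energy E0 r k x / P k"
      using after x unfolding f_def by auto
    ultimately show "r i x / P i \<le> r k x / P k"
      using gx Ppos i k is_policyD(3)[OF p]
      by (intro ggddf_rates_ratio_mono[where e="\<lambda>j. energy E0 r j x" and \<rho>="\<lambda>j. r j x"]) auto
  qed
  then have "(LINT x:{w<..v}|lborel. r i x / P i) \<le> (LINT x:{w<..v}|lborel. r k x / P k)"
    using i k w uv by (intro set_integral_mono_AE) (auto intro!: policy_set_integrable[OF p, of _ _ v])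
  then have "(energy E0 r i w - energy E0 r i v) / P i \<le> (energy E0 r k w - energy E0 r k v) / P k"
    using energy_diff_eq_integral[OF p i, of w v] energy_diff_eq_integral[OF p k, of w v] w uv by simp
  then have "f w \<le> f v" unfolding f_def by (simp add: diff_divide_distrib)
  then show False using w \<open>f v < 0\<close> by simp
qed


lemma ggddf_empty_store_shorter_duration:
  assumes r: "is_policy S Ebar P E0 d r" and g: "ggddf S P E0 d r" and Ppos: "\<forall>i\<in>S. 0 < P i"
    and i: "i \<in> S" "energy E0 r i t = 0" and k: "k \<in> S" "0 < energy E0 r k t"
    and x: "0 \<le> x" "x \<le> t"
  shows "energy E0 r i x / P i < energy E0 r k x / P k"
proof (rule ccontr)
  assume "\<not> ?thesis"
  then have "energy E0 r k t / P k \<le> energy E0 r i t / P i"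
    using ggddf_duration_order_preserved[OF r g Ppos i(1) k(1) x] by simp
  then show False using i(2) k Ppos by (auto simp: divide_le_0_iff)
qed

lemma ggddf_nonempty_stores_dominate:
  assumes fin: "finite S" and Ppos: "\<forall>i\<in>S. 0 < P i"
    and r: "is_policy S Ebar P E0 d r" and g: "ggddf S P E0 d r"
    and \<pi>: "is_policy S Ebar P E0 d \<pi>" and t: "0 \<le> t"
  defines "K \<equiv> {i\<in>S. 0 < energy E0 r i t}"
  shows "AE x\<in>{0..t} in lborel. (\<Sum>i\<in>K. \<pi> i x) \<le> (\<Sum>i\<in>K. r i x)"
  using g unfolding ggddf_def
proof (rule AE_mp, intro AE_I2 impI)
  fix x assume gx: "0 \<le> x \<longrightarrow> ggddf_rates S P (d x) (\<lambda>j. energy E0 r j x) (\<lambda>j. r j x)"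
    and x: "x \<in> {0..t}"
  have KS: "K \<subseteq> S" unfolding K_def by auto
  have rates: "ggddf_rates S P (d x) (\<lambda>j. energy E0 r j x) (\<lambda>j. r j x)"
    using gx x by simp
  have nonempty: "\<forall>k\<in>K. 0 < energy E0 r k x"
    using energy_decrease_bounds(1)[OF r, of _ x t] x unfolding K_def by force
  have "energy E0 r i t = 0" if "i \<in> S - K" for i
    using that is_policyD(3)[OF r _ t] unfolding K_def by force
  then have upper: "\<forall>i\<in>S - K. \<forall>k\<in>K. energy E0 r i x / P i < energy E0 r k x / P k"
    using ggddf_empty_store_shorter_duration[OF r g Ppos, where t=t and x=x] x unfolding K_def by auto
  have \<pi>x: "\<forall>i\<in>S. 0 \<le> \<pi> i x \<and> \<pi> i x \<le> P i" "(\<Sum>i\<in>S. \<pi> i x) \<le> d x"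
    using \<pi> x unfolding is_policy_def by auto
  show "(\<Sum>i\<in>K. \<pi> i x) \<le> (\<Sum>i\<in>K. r i x)"
    by (rule ggddf_rates_upper_set_dominates[OF rates fin Ppos KS nonempty upper \<pi>x])
qed

lemma ggddf_served_energy_ge:
  assumes fin: "finite S" and Ppos: "\<forall>i\<in>S. 0 < P i"
    and r: "is_policy S Ebar P E0 d r" and g: "ggddf S P E0 d r"
    and \<pi>: "is_policy S Ebar P E0 d \<pi>" and t: "0 \<le> t"
  shows "(\<Sum>i\<in>S. LINT u:{0..t}|lborel. \<pi> i u) \<le> (\<Sum>i\<in>S. LINT u:{0..t}|lborel. r i u)"
proof -
  define K where "K = {i\<in>S. 0 < energy E0 r i t}"
  have KS: "K \<subseteq> S" unfolding K_def by auto
  have integrable: "set_integrable lborel {0..t} (\<pi> i)" "set_integrable lborel {0..t} (r i)"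
    if "i \<in> S" for i
    using that by (auto intro: policy_set_integrable[OF \<pi>] policy_set_integrable[OF r])
  have "(LINT x:{0..t}|lborel. (\<Sum>i\<in>K. \<pi> i x)) \<le> (LINT x:{0..t}|lborel. (\<Sum>i\<in>K. r i x))"
    using ggddf_nonempty_stores_dominate[OF fin Ppos r g \<pi> t] KS integrable
    unfolding K_def[symmetric] by (intro set_integral_mono_AE set_integrable_sum) auto
  then have "(\<Sum>i\<in>K. LINT u:{0..t}|lborel. \<pi> i u) \<le> (\<Sum>i\<in>K. LINT u:{0..t}|lborel. r i u)"
    using KS integrable by (subst (asm) (1 2) set_integral_sum) auto
  \<comment> \<open>stores empty at time t have delivered all their initial energy, which no policy exceeds\<close>
  moreover have "(LINT u:{0..t}|lborel. \<pi> i u) \<le> (LINT u:{0..t}|lborel. r i u)" if "i \<in> S - K" for i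
    using that is_policyD(3)[OF r _ t] is_policyD(3)[OF \<pi> _ t] unfolding K_def energy_def by force
  then have "(\<Sum>i\<in>S - K. LINT u:{0..t}|lborel. \<pi> i u) \<le> (\<Sum>i\<in>S - K. LINT u:{0..t}|lborel. r i u)"
    by (rule sum_mono)
  ultimately show ?thesis
    using sum.subset_diff[OF KS fin, of "\<lambda>i. LINT u:{0..t}|lborel. \<pi> i u"]
      sum.subset_diff[OF KS fin, of "\<lambda>i. LINT u:{0..t}|lborel. r i u"] by linarith
qed

lemma unserved_integrand_on_interval:
  assumes p: "is_policy S Ebar P E0 d f"
  shows "ennreal (max (d t - (\<Sum>i\<in>S. f i t)) 0) * indicator {0..b} t
       = ennreal (indicator {0..b} t * (d t - (\<Sum>i\<in>S. f i t)))"
  using p unfolding is_policy_def by (cases "t \<in> {0..b}") (auto simp: max_def)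

lemma unserved_integrand_integrable:
  assumes p: "is_policy S Ebar P E0 d f" and d: "set_integrable lborel {0..b} d"
  shows "set_integrable lborel {0..b} (\<lambda>t. d t - (\<Sum>i\<in>S. f i t))"
  using d by (intro set_integral_diff(1) set_integrable_sum policy_set_integrable[OF p]) auto

lemma unserved_ereal:
  assumes p: "is_policy S Ebar P E0 d f" and d: "set_integrable lborel {0..b} d"
  shows "unserved S d f (ereal b)
       = ennreal ((LINT t:{0..b}|lborel. d t) - (\<Sum>i\<in>S. LINT t:{0..b}|lborel. f i t))"
proof -
  have f: "set_integrable lborel {0..b} (f i)" if "i \<in> S" for i
    using that by (intro policy_set_integrable[OF p]) auto
  have "{t. 0 \<le> t \<and> ereal t \<le> ereal b} = {0..b}" by auto
  then have "unserved S d f (ereal b)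
      = (\<integral>\<^sup>+ t. ennreal (indicator {0..b} t * (d t - (\<Sum>i\<in>S. f i t))) \<partial>lborel)"
    unfolding unserved_def by (simp only: unserved_integrand_on_interval[OF p])
  also have "\<dots> = ennreal (LINT t:{0..b}|lborel. d t - (\<Sum>i\<in>S. f i t))"
    unfolding set_lebesgue_integral_def real_scaleR_def
  proof (rule nn_integral_eq_integral)
    show "integrable lborel (\<lambda>t. indicator {0..b} t * (d t - (\<Sum>i\<in>S. f i t)))"
      using unserved_integrand_integrable[OF p d] unfolding set_integrable_def by simp
    show "AE t in lborel. 0 \<le> indicator {0..b} t * (d t - (\<Sum>i\<in>S. f i t))"
      using p unfolding is_policy_def by (intro AE_I2) (auto simp: indicator_def)
  qed
  also have "(LINT t:{0..b}|lborel. d t - (\<Sum>i\<in>S. f i t))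
      = (LINT t:{0..b}|lborel. d t) - (\<Sum>i\<in>S. LINT t:{0..b}|lborel. f i t)"
    using d f by (simp add: set_integrable_sum set_integral_sum)
  finally show ?thesis .
qed

lemma unserved_PInf:
  assumes p: "is_policy S Ebar P E0 d f" and d: "\<forall>b. set_integrable lborel {0..b} d"
  shows "unserved S d f \<infinity> = (SUP n::nat. unserved S d f (ereal (real n)))"
proof -
  define G where "G n t = ennreal (max (d t - (\<Sum>i\<in>S. f i t)) 0) * indicator {0..real n} t"
    for n :: nat and t
  have "(SUP n::nat. indicator {0..real n} t) = (indicator {0..} t :: ennreal)" for t
  proof (cases "0 \<le> t")
    case True
    have "t \<le> real (nat \<lceil>t\<rceil>)" by linarith
    then have "(1::ennreal) \<le> (SUP n::nat. indicator {0..real n} t)"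
      using True by (intro SUP_upper2[of "nat \<lceil>t\<rceil>"]) auto
    then show ?thesis using True by (intro antisym SUP_least) (auto simp: indicator_def)
  qed simp
  then have "(SUP n. G n t) = ennreal (max (d t - (\<Sum>i\<in>S. f i t)) 0) * indicator {0..} t" for t
    unfolding G_def by (simp add: SUP_mult_left_ennreal[symmetric])
  moreover have "{t. 0 \<le> t \<and> ereal t \<le> \<infinity>} = {0..}"
    "{t. 0 \<le> t \<and> ereal t \<le> ereal (real n)} = {0..real n}" for n :: nat by auto
  ultimately have unserved_G: "unserved S d f \<infinity> = (\<integral>\<^sup>+ t. (SUP n. G n t) \<partial>lborel)"
    "unserved S d f (ereal (real n)) = integral\<^sup>N lborel (G n)" for n
    unfolding unserved_def G_def by simp_all
  have "incseq G"
    by (auto simp: incseq_def le_fun_def G_def indicator_def intro!: mult_left_mono)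
  moreover have "G n \<in> borel_measurable lborel" for n
  proof -
    have "(\<lambda>t. indicator {0..real n} t * (d t - (\<Sum>i\<in>S. f i t))) \<in> borel_measurable lborel"
      using unserved_integrand_integrable[OF p d[rule_format]]
      unfolding set_integrable_def by (simp add: borel_measurable_integrable)
    then show ?thesis unfolding G_def unserved_integrand_on_interval[OF p] by measurable
  qed
  ultimately show ?thesis
    unfolding unserved_G by (intro nn_integral_monotone_convergence_SUP) auto
qed

lemma unserved_ggddf_le:
  assumes fin: "finite S" and Ppos: "\<forall>i\<in>S. 0 < P i"
    and d: "\<forall>b. set_integrable lborel {0..b} d"
    and r: "is_policy S Ebar P E0 d r" and g: "ggddf S P E0 d r"
    and \<pi>: "is_policy S Ebar P E0 d \<pi>" and T: "0 < T"
  shows "unserved S d r T \<le> unserved S d \<pi> T"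
proof -
  have finite_horizon: "unserved S d r (ereal b) \<le> unserved S d \<pi> (ereal b)" if "0 \<le> b" for b
    using ggddf_served_energy_ge[OF fin Ppos r g \<pi> that]
    by (simp add: unserved_ereal[OF r d[rule_format]] unserved_ereal[OF \<pi> d[rule_format]] ennreal_leI)
  show ?thesis
  proof (cases T)
    case (real b)
    then show ?thesis using T finite_horizon by simp
  next
    case PInf
    show ?thesis
      unfolding PInf unserved_PInf[OF r d] unserved_PInf[OF \<pi> d]
    proof (rule SUP_mono)
      fix n :: nat
      show "\<exists>m\<in>UNIV. unserved S d r (ereal (real n)) \<le> unserved S d \<pi> (ereal (real m))"
        using finite_horizon[of "real n"] by auto
    qed
  qed (use T in simp)
qed

lemma quantile_mono:
  assumes "finite_measure M" and X: "X \<in> borel_measurable M"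
    and le: "\<forall>\<omega>\<in>space M. X \<omega> \<le> Y \<omega>"
  shows "quantile M X q \<le> quantile M Y q"
  unfolding quantile_def
proof (rule Inf_superset_mono, safe)
  fix x assume q: "q \<le> measure M {\<omega> \<in> space M. Y \<omega> \<le> x}"
  have "{\<omega> \<in> space M. Y \<omega> \<le> x} \<subseteq> {\<omega> \<in> space M. X \<omega> \<le> x}"
    using le order.trans by blast
  moreover have "{\<omega> \<in> space M. X \<omega> \<le> x} \<in> sets M" using X by measurable
  ultimately have "measure M {\<omega> \<in> space M. Y \<omega> \<le> x} \<le> measure M {\<omega> \<in> space M. X \<omega> \<le> x}"
    using \<open>finite_measure M\<close> by (intro finite_measure.finite_measure_mono)
  then show "q \<le> measure M {\<omega> \<in> space M. X \<omega> \<le> x}" using q by simp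
qed

lemma ggddf_state_feedback:
  assumes g: "ggddf S P E0 d r" and fin: "finite S" and Ppos: "\<forall>i\<in>S. 0 < P i"
  shows "AE t in lborel. 0 \<le> t \<longrightarrow>
    (\<forall>i\<in>S. r i t = (SOME \<rho>. ggddf_rates S P (d t) (\<lambda>j. energy E0 r j t) \<rho>) i)"
  using g unfolding ggddf_def
proof (elim AE_mp, intro AE_I2 impI ballI)
  fix t i assume "0 \<le> t \<longrightarrow> ggddf_rates S P (d t) (\<lambda>j. energy E0 r j t) (\<lambda>j. r j t)"
    and "0 \<le> t" and i: "i \<in> S"
  then have rates: "ggddf_rates S P (d t) (\<lambda>j. energy E0 r j t) (\<lambda>j. r j t)" by simp
  then have "ggddf_rates S P (d t) (\<lambda>j. energy E0 r j t)
      (SOME \<rho>. ggddf_rates S P (d t) (\<lambda>j. energy E0 r j t) \<rho>)"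
    by (rule someI[where x="\<lambda>j. r j t"])
  with rates show "r i t = (SOME \<rho>. ggddf_rates S P (d t) (\<lambda>j. energy E0 r j t) \<rho>) i"
    using fin Ppos i by (rule ggddf_rates_unique)
qed

theorem corollary2:
  fixes S :: "'s set" and Ebar P E0 :: "'s \<Rightarrow> real" and M :: "'w measure"
    and D :: "'w \<Rightarrow> real \<Rightarrow> real" and T :: ereal
    and rG :: "'w \<Rightarrow> 's \<Rightarrow> real \<Rightarrow> real"
  assumes "finite S"
    and "\<forall>i\<in>S. 0 < Ebar i" and "\<forall>i\<in>S. 0 < P i"
    and "prob_space M"
    and "\<forall>\<omega>\<in>space M. \<forall>t\<ge>0. 0 \<le> D \<omega> t"
    and "\<forall>\<omega>\<in>space M. \<forall>b. set_integrable lborel {0..b} (D \<omega>)"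
    and "0 < T"
    and "\<forall>\<omega>\<in>space M. is_policy S Ebar P E0 (D \<omega>) (rG \<omega>) \<and> ggddf S P E0 (D \<omega>) (rG \<omega>)"
  shows "(\<exists>F. \<forall>\<omega>\<in>space M. AE t in lborel. 0 \<le> t \<longrightarrow>
            (\<forall>i\<in>S. rG \<omega> i t = F (D \<omega> t) (\<lambda>j. energy E0 (rG \<omega>) j t) i))
    \<and> (\<forall>\<pi>. (\<forall>\<omega>\<in>space M. is_policy S Ebar P E0 (D \<omega>) (\<pi> \<omega>)) \<and> nonanticipatory M D \<pi> S \<longrightarrow>
          (AE \<omega> in M. unserved S (D \<omega>) (rG \<omega>) T \<le> unserved S (D \<omega>) (\<pi> \<omega>) T)
        \<and> (\<integral>\<^sup>+\<omega>. unserved S (D \<omega>) (rG \<omega>) T \<partial>M) \<le> (\<integral>\<^sup>+\<omega>. unserved S (D \<omega>) (\<pi> \<omega>) T \<partial>M)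
        \<and> (\<forall>q. 0 < q \<and> q < 1 \<longrightarrow>
              (\<lambda>\<omega>. unserved S (D \<omega>) (rG \<omega>) T) \<in> borel_measurable M \<longrightarrow>
              (\<lambda>\<omega>. unserved S (D \<omega>) (\<pi> \<omega>) T) \<in> borel_measurable M \<longrightarrow>
              quantile M (\<lambda>\<omega>. unserved S (D \<omega>) (rG \<omega>) T) q
                \<le> quantile M (\<lambda>\<omega>. unserved S (D \<omega>) (\<pi> \<omega>) T) q))"
proof (intro conjI allI impI)
  show "\<exists>F. \<forall>\<omega>\<in>space M. AE t in lborel. 0 \<le> t \<longrightarrow>
            (\<forall>i\<in>S. rG \<omega> i t = F (D \<omega> t) (\<lambda>j. energy E0 (rG \<omega>) j t) i)"
  proof (intro exI[of _ "\<lambda>x e. SOME \<rho>. ggddf_rates S P x e \<rho>"] ballI)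
    fix \<omega> assume "\<omega> \<in> space M"
    then show "AE t in lborel. 0 \<le> t \<longrightarrow> (\<forall>i\<in>S. rG \<omega> i t
        = (SOME \<rho>. ggddf_rates S P (D \<omega> t) (\<lambda>j. energy E0 (rG \<omega>) j t) \<rho>) i)"
      using assms(8) by (intro ggddf_state_feedback[OF _ assms(1,3)]) blast
  qed
next
  fix \<pi> assume "(\<forall>\<omega>\<in>space M. is_policy S Ebar P E0 (D \<omega>) (\<pi> \<omega>)) \<and> nonanticipatory M D \<pi> S"
  then have \<pi>: "is_policy S Ebar P E0 (D \<omega>) (\<pi> \<omega>)" if "\<omega> \<in> space M" for \<omega>
    using that by blast
  have pathwise: "unserved S (D \<omega>) (rG \<omega>) T \<le> unserved S (D \<omega>) (\<pi> \<omega>) T"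
    if "\<omega> \<in> space M" for \<omega>
    using assms(6,8) that
    by (intro unserved_ggddf_le[OF assms(1,3) _ _ _ \<pi>[OF that] assms(7)]) auto
  then show "AE \<omega> in M. unserved S (D \<omega>) (rG \<omega>) T \<le> unserved S (D \<omega>) (\<pi> \<omega>) T"
    by (intro AE_I2)
  show "(\<integral>\<^sup>+\<omega>. unserved S (D \<omega>) (rG \<omega>) T \<partial>M) \<le> (\<integral>\<^sup>+\<omega>. unserved S (D \<omega>) (\<pi> \<omega>) T \<partial>M)"
    using pathwise by (intro nn_integral_mono)
  fix q assume "(\<lambda>\<omega>. unserved S (D \<omega>) (rG \<omega>) T) \<in> borel_measurable M"
  with prob_space.finite_measure[OF assms(4)] pathwise
  show "quantile M (\<lambda>\<omega>. unserved S (D \<omega>) (rG \<omega>) T) q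
      \<le> quantile M (\<lambda>\<omega>. unserved S (D \<omega>) (\<pi> \<omega>) T) q"
    by (intro quantile_mono) auto
qed

end
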